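(* Let $W=\langle s,t: s^2=t^2=(st)^m=1\rangle$ be a Coxeter group of rank $2$ with $S=\{s,t\}$, $m\ge2$ the order of $st$, and $w_0$ its longest element. Then the right $W$-module $e_S\mathbb CW$ affords the character $\Phi_S=\operatorname{Ind}_{\langle w_0\rangle}^W(1)-1_S$.
   Context: $1_S$ is the trivial character of $W$. For $J\subseteq S$: $X_J=\{w\in W:\ell(rw)>\ell(w)\ \forall r\in J\}$, $x_J=\sum_{x\in X_J}x^{-1}$, $X_J^\sharp=\{x\in X_J:x^{-1}Jx\subseteq S\}$; $m_{KL}=|X_K\cap X_L^\sharp|$ if $L\subseteq K$ and $0$ otherwise; the elements $e_L$ are defined by $x_K=\sum_{L\subseteq S}m_{KL}e_L$ for all $K\subseteq S$. *)

theory Defs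
  imports Complex_Main "HOL-Algebra.Generated_Groups" "HOL-Library.Function_Algebras"
begin

definition cox_len :: "('a, 'b) monoid_scheme \<Rightarrow> 'a set \<Rightarrow> 'a \<Rightarrow> nat" where
  "cox_len G S w = (LEAST n. \<exists>ws. set ws \<subseteq> S \<and> length ws = n \<and> foldr (\<otimes>\<^bsub>G\<^esub>) ws \<one>\<^bsub>G\<^esub> = w)"

definition longest_elt :: "('a, 'b) monoid_scheme \<Rightarrow> 'a set \<Rightarrow> 'a" where
  "longest_elt G S = (THE w. w \<in> carrier G \<and> (\<forall>v\<in>carrier G. cox_len G S v \<le> cox_len G S w))"

definition X_set :: "('a, 'b) monoid_scheme \<Rightarrow> 'a set \<Rightarrow> 'a set \<Rightarrow> 'a set" where
  "X_set G S J = {w \<in> carrier G. \<forall>r\<in>J. cox_len G S (r \<otimes>\<^bsub>G\<^esub> w) > cox_len G S w}"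

definition X_sharp :: "('a, 'b) monoid_scheme \<Rightarrow> 'a set \<Rightarrow> 'a set \<Rightarrow> 'a set" where
  "X_sharp G S J = {x \<in> X_set G S J. (\<lambda>r. inv\<^bsub>G\<^esub> x \<otimes>\<^bsub>G\<^esub> r \<otimes>\<^bsub>G\<^esub> x) ` J \<subseteq> S}"

definition m_coef :: "('a, 'b) monoid_scheme \<Rightarrow> 'a set \<Rightarrow> 'a set \<Rightarrow> 'a set \<Rightarrow> nat" where
  "m_coef G S K L = (if L \<subseteq> K then card (X_set G S K \<inter> X_sharp G S L) else 0)"

definition group_alg :: "('a, 'b) monoid_scheme \<Rightarrow> ('a \<Rightarrow> complex) set" where
  "group_alg G = {a. \<forall>x. x \<notin> carrier G \<longrightarrow> a x = 0}"

definition gdelta :: "'a \<Rightarrow> 'a \<Rightarrow> complex" where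
  "gdelta w = (\<lambda>x. if x = w then 1 else 0)"

text \<open>Multiplication in CW (convolution), so that gdelta u * gdelta v = gdelta (u v).\<close>
definition gmult :: "('a, 'b) monoid_scheme \<Rightarrow> ('a \<Rightarrow> complex) \<Rightarrow> ('a \<Rightarrow> complex) \<Rightarrow> 'a \<Rightarrow> complex" where
  "gmult G a b = (\<lambda>w. if w \<in> carrier G
      then (\<Sum>u\<in>carrier G. a u * b (inv\<^bsub>G\<^esub> u \<otimes>\<^bsub>G\<^esub> w)) else 0)"

definition x_elt :: "('a, 'b) monoid_scheme \<Rightarrow> 'a set \<Rightarrow> 'a set \<Rightarrow> 'a \<Rightarrow> complex" where
  "x_elt G S J = (\<Sum>x\<in>X_set G S J. gdelta (inv\<^bsub>G\<^esub> x))"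

text \<open>The family (e_L)_{L \<subseteq> S}, uniquely determined by x_K = sum_L m_{KL} e_L for all K \<subseteq> S
  (extended by 0 outside the subsets of S, so that it is unique).\<close>
definition e_fam :: "('a, 'b) monoid_scheme \<Rightarrow> 'a set \<Rightarrow> 'a set \<Rightarrow> 'a \<Rightarrow> complex" where
  "e_fam G S = (THE e. (\<forall>K. K \<subseteq> S \<longrightarrow>
        x_elt G S K = (\<Sum>L\<in>Pow S. (\<lambda>x. of_nat (m_coef G S K L) * e L x)))
      \<and> (\<forall>L. \<not> L \<subseteq> S \<longrightarrow> e L = (\<lambda>_. 0)))"

definition cscale :: "complex \<Rightarrow> ('a \<Rightarrow> complex) \<Rightarrow> 'a \<Rightarrow> complex" where
  "cscale c v = (\<lambda>x. c * v x)"

definition subspace_trace :: "('a \<Rightarrow> complex) set \<Rightarrow> (('a \<Rightarrow> complex) \<Rightarrow> ('a \<Rightarrow> complex)) \<Rightarrow> complex" where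
  "subspace_trace V f = (let B = (SOME B. B \<subseteq> V \<and> \<not> module.dependent cscale B \<and> module.span cscale B = V)
      in \<Sum>b\<in>B. module.representation cscale B (f b) b)"

definition right_ideal_char :: "('a, 'b) monoid_scheme \<Rightarrow> ('a \<Rightarrow> complex) \<Rightarrow> 'a \<Rightarrow> complex" where
  "right_ideal_char G a w = subspace_trace {gmult G a b | b. b \<in> group_alg G} (\<lambda>v. gmult G v (gdelta w))"

definition ind_triv :: "('a, 'b) monoid_scheme \<Rightarrow> 'a set \<Rightarrow> 'a \<Rightarrow> complex" where
  "ind_triv G H w = (1 / of_nat (card H)) *
     (\<Sum>g\<in>carrier G. if inv\<^bsub>G\<^esub> g \<otimes>\<^bsub>G\<^esub> w \<otimes>\<^bsub>G\<^esub> g \<in> H then 1 else 0)"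

end

theory Submission
  imports Defs
begin

text \<open>For a finite group \<open>W\<close>, a subgroup \<open>K\<close> and \<open>e\<^sub>H = (1/|H|) \<Sum>\<^sub>h\<^sub>\<in>\<^sub>H h\<close>, the element
  \<open>e = e\<^sub>K - e\<^sub>W\<close> is idempotent, so every \<open>v\<close> in the right ideal \<open>e \<bbbC>W\<close> equals
  \<open>\<Sum>\<^sub>g v(g) (e g)\<close>. Reading the trace of \<open>v \<mapsto> v w\<close> off this spanning family gives
  \<open>\<Sum>\<^sub>g e(g w\<inverse> g\<inverse>)\<close>, which is \<open>Ind\<^sub>K\<^sup>W(1)(w) - 1\<close>.

  In the dihedral group of order \<open>2m\<close> every element is \<open>(st)\<^sup>j s\<^sup>b\<close> with an explicit length, so all
  data of the system \<open>x\<^sub>K = \<Sum>\<^sub>L m\<^sub>K\<^sub>L e\<^sub>L\<close> can be computed: \<open>X\<^sub>\<emptyset> = W\<close>, the sets \<open>X\<^sub>s\<close> and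
  \<open>X\<^sub>t\<close> of elements with left ascent \<open>s\<close> resp. \<open>t\<close> are halves of \<open>W\<close> meeting in \<open>X\<^sub>S = {1}\<close>
  and jointly missing only \<open>w\<^sub>0\<close>, and \<open>|X\<^sub>s \<inter> X\<^sub>s\<^sup>\<sharp>| = |X\<^sub>t \<inter> X\<^sub>t\<^sup>\<sharp>| = 2\<close>. Solving the
  unitriangular system gives \<open>e\<^sub>S = e\<^sub>K - e\<^sub>W\<close> with \<open>K = \<langle>w\<^sub>0\<rangle> = {1, w\<^sub>0}\<close>.\<close>

section \<open>Characters of idempotent right ideals\<close>

lemma sum_fun_apply: "sum f A x = (\<Sum>i\<in>A. f i x)"
  by (induct A rule: infinite_finite_induct) auto

lemma vector_space_cscale: "vector_space (cscale :: complex \<Rightarrow> ('a \<Rightarrow> complex) \<Rightarrow> _)"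
  by unfold_locales (auto simp: cscale_def algebra_simps)

interpretation cs: vector_space "cscale :: complex \<Rightarrow> ('a \<Rightarrow> complex) \<Rightarrow> _"
  by (rule vector_space_cscale)

text \<open>If every vector of \<open>V\<close> is the combination of a finite family \<open>p\<close> with its own values as
  coefficients, then the diagonal entries of \<open>f\<close> can be read off at the index points, whatever
  basis \<open>subspace_trace\<close> happens to choose.\<close>
lemma subspace_trace_eq_sum_eval:
  fixes V :: "('a \<Rightarrow> complex) set" and p :: "'a \<Rightarrow> 'a \<Rightarrow> complex"
  assumes finI: "finite I"
    and sub: "cs.subspace V"
    and pV: "\<And>g. g \<in> I \<Longrightarrow> p g \<in> V"
    and expand: "\<And>v. v \<in> V \<Longrightarrow> v = (\<Sum>g\<in>I. cscale (v g) (p g))"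
    and fV: "\<And>v. v \<in> V \<Longrightarrow> f v \<in> V"
    and flin: "\<And>a v. (\<And>g. g \<in> I \<Longrightarrow> v g \<in> V) \<Longrightarrow>
                 f (\<Sum>g\<in>I. cscale (a g) (v g)) = (\<Sum>g\<in>I. cscale (a g) (f (v g)))"
  shows "subspace_trace V f = (\<Sum>g\<in>I. f (p g) g)"
proof -
  define P where "P = (\<lambda>B. B \<subseteq> V \<and> \<not> cs.dependent B \<and> cs.span B = V)"
  obtain B0 where B0: "B0 \<subseteq> V" "cs.independent B0" "V \<subseteq> cs.span B0"
    by (rule cs.basis_exists[of V]) blast
  with sub cs.span_minimal have "P B0" unfolding P_def by blast
  define B where "B = (SOME B. P B)"
  have "P B" unfolding B_def using \<open>P B0\<close> by (rule someI)
  hence BV: "B \<subseteq> V" and indB: "cs.independent B" and spB: "cs.span B = V"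
    unfolding P_def by auto
  have "V \<subseteq> cs.span (p ` I)"
  proof
    fix v assume "v \<in> V"
    hence "v = (\<Sum>g\<in>I. cscale (v g) (p g))" by (rule expand)
    also have "\<dots> \<in> cs.span (p ` I)"
      by (intro cs.span_sum cs.span_scale cs.span_base) auto
    finally show "v \<in> cs.span (p ` I)" .
  qed
  hence finB: "finite B"
    using cs.independent_span_bound[OF finite_imageI[OF finI] indB] BV by auto
  let ?R = "cs.representation B"
  have fp_span: "f (p g) \<in> cs.span B" if "g \<in> I" for g
    using fV pV spB that by auto
  have diag: "?R (f b) b = (\<Sum>g\<in>I. b g * ?R (f (p g)) b)" if b: "b \<in> B" for b
  proof -
    have "f b = f (\<Sum>g\<in>I. cscale (b g) (p g))" using expand[of b] b BV by auto
    also have "\<dots> = (\<Sum>g\<in>I. cscale (b g) (f (p g)))" by (rule flin) (rule pV)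
    finally have "?R (f b) = ?R (\<Sum>g\<in>I. cscale (b g) (f (p g)))" by simp
    also have "\<dots> = (\<lambda>b'. \<Sum>g\<in>I. ?R (cscale (b g) (f (p g))) b')"
      by (rule cs.representation_sum[OF indB]) (intro cs.span_scale fp_span)
    also have "\<dots> = (\<lambda>b'. \<Sum>g\<in>I. b g * ?R (f (p g)) b')"
      using cs.representation_scale[OF indB fp_span] by simp
    finally show ?thesis by simp
  qed
  have "subspace_trace V f = (\<Sum>b\<in>B. ?R (f b) b)"
    unfolding subspace_trace_def Let_def P_def[symmetric] B_def[symmetric] ..
  also have "\<dots> = (\<Sum>b\<in>B. \<Sum>g\<in>I. ?R (f (p g)) b * b g)"
    by (rule sum.cong[OF refl]) (simp add: diag mult.commute)
  also have "\<dots> = (\<Sum>g\<in>I. \<Sum>b\<in>B. ?R (f (p g)) b * b g)"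
    by (rule sum.swap)
  also have "\<dots> = (\<Sum>g\<in>I. (\<Sum>b\<in>B. cscale (?R (f (p g)) b) b) g)"
    by (simp add: sum_fun_apply cscale_def)
  also have "\<dots> = (\<Sum>g\<in>I. f (p g) g)"
  proof (rule sum.cong[OF refl])
    fix g assume "g \<in> I"
    have "(\<Sum>b\<in>B. cscale (?R (f (p g)) b) b) = f (p g)"
      by (rule cs.sum_representation_eq[OF indB fp_span[OF \<open>g \<in> I\<close>] finB order_refl])
    thus "(\<Sum>b\<in>B. cscale (?R (f (p g)) b) b) g = f (p g) g" by simp
  qed
  finally show ?thesis .
qed

definition avg_elt :: "'a set \<Rightarrow> 'a \<Rightarrow> complex" where
  "avg_elt H = (\<lambda>x. if x \<in> H then 1 / of_nat (card H) else 0)"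

lemma sum_avg_elt:
  assumes "finite A" "H \<subseteq> A" "H \<noteq> {}"
  shows "(\<Sum>x\<in>A. avg_elt H x) = 1"
proof -
  have "finite H" using finite_subset[OF assms(2,1)] .
  hence "(\<Sum>x\<in>A. avg_elt H x) = of_nat (card H) * (1 / of_nat (card H))"
    using assms by (simp add: avg_elt_def sum.If_cases Int_absorb1)
  thus ?thesis using \<open>finite H\<close> \<open>H \<noteq> {}\<close> by simp
qed

context group
begin

lemma sum_carrier_mult_left:
  assumes a: "a \<in> carrier G"
  shows "(\<Sum>x\<in>carrier G. f (a \<otimes> x)) = (\<Sum>y\<in>carrier G. f y)"
  by (rule sum.reindex_bij_witness[where i="\<lambda>y. inv a \<otimes> y" and j="\<lambda>x. a \<otimes> x"])
     (use a in \<open>auto simp flip: m_assoc\<close>)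

lemma sum_carrier_inv: "(\<Sum>x\<in>carrier G. f (inv x)) = (\<Sum>y\<in>carrier G. f y)"
  by (rule sum.reindex_bij_witness[where i="\<lambda>y. inv y" and j="\<lambda>x. inv x"]) auto

lemma sum_carrier_mult_right:
  assumes a: "a \<in> carrier G"
  shows "(\<Sum>x\<in>carrier G. f (x \<otimes> a)) = (\<Sum>y\<in>carrier G. f y)"
  by (rule sum.reindex_bij_witness[where i="\<lambda>y. y \<otimes> inv a" and j="\<lambda>x. x \<otimes> a"])
     (use a in \<open>auto simp: m_assoc\<close>)

lemma sum_carrier_inv_mult:
  assumes a: "a \<in> carrier G"
  shows "(\<Sum>x\<in>carrier G. f (inv x \<otimes> a)) = (\<Sum>y\<in>carrier G. f y)"
  using sum_carrier_inv[of "\<lambda>y. f (y \<otimes> a)"] sum_carrier_mult_right[OF a] by simp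

lemma sum_conj_mem_subgroup:
  assumes K: "subgroup K G" and w: "w \<in> carrier G"
  shows "(\<Sum>g\<in>carrier G. if g \<otimes> inv w \<otimes> inv g \<in> K then c else 0)
       = (\<Sum>g\<in>carrier G. if inv g \<otimes> w \<otimes> g \<in> K then c else 0)"
proof -
  have conj_inv: "g \<otimes> w \<otimes> inv g \<in> K \<longleftrightarrow> g \<otimes> inv w \<otimes> inv g \<in> K"
    if g: "g \<in> carrier G" for g
  proof -
    have conj: "g \<otimes> w \<otimes> inv g \<in> carrier G" using g w by simp
    have "inv (g \<otimes> w \<otimes> inv g) = g \<otimes> inv w \<otimes> inv g"
      using g w by (simp add: inv_mult_group m_assoc)
    moreover have "g \<otimes> w \<otimes> inv g \<in> K \<longleftrightarrow> inv (g \<otimes> w \<otimes> inv g) \<in> K"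
      using subgroup.m_inv_closed[OF K, of "g \<otimes> w \<otimes> inv g"]
            subgroup.m_inv_closed[OF K, of "inv (g \<otimes> w \<otimes> inv g)"] conj by auto
    ultimately show ?thesis by simp
  qed
  have "(\<Sum>g\<in>carrier G. if inv g \<otimes> w \<otimes> g \<in> K then c else 0)
      = (\<Sum>g\<in>carrier G. if inv (inv g) \<otimes> w \<otimes> inv g \<in> K then c else 0)"
    by (rule sum_carrier_inv[symmetric])
  also have "\<dots> = (\<Sum>g\<in>carrier G. if g \<otimes> inv w \<otimes> inv g \<in> K then c else 0)"
    by (rule sum.cong[OF refl]) (simp add: conj_inv)
  finally show ?thesis by simp
qed

lemma gmult_in_group_alg: "gmult G a b \<in> group_alg G"
  by (simp add: gmult_def group_alg_def)

lemma subspace_group_alg: "cs.subspace (group_alg G)"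
  by (auto simp: cs.subspace_def group_alg_def cscale_def)

lemma linear_gmult_right: "Vector_Spaces.linear cscale cscale (gmult G a)"
  unfolding Vector_Spaces.linear_iff
  by (auto simp: vector_space_cscale gmult_def cscale_def sum.distrib sum_distrib_left
                 algebra_simps fun_eq_iff)

lemma linear_gmult_left: "Vector_Spaces.linear cscale cscale (\<lambda>a. gmult G a b)"
  unfolding Vector_Spaces.linear_iff
  by (auto simp: vector_space_cscale gmult_def cscale_def sum.distrib sum_distrib_left
                 algebra_simps fun_eq_iff)

lemma gmult_assoc: "gmult G (gmult G a b) c = gmult G a (gmult G b c)"
proof
  fix x
  show "gmult G (gmult G a b) c x = gmult G a (gmult G b c) x"
  proof (cases "x \<in> carrier G")
    case x: True
    have inner: "(\<Sum>u\<in>carrier G. b (inv v \<otimes> u) * c (inv u \<otimes> x))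
        = (\<Sum>y\<in>carrier G. b y * c (inv y \<otimes> (inv v \<otimes> x)))" if v: "v \<in> carrier G" for v
    proof -
      have "(\<Sum>u\<in>carrier G. b (inv v \<otimes> u) * c (inv u \<otimes> x))
          = (\<Sum>y\<in>carrier G. b (inv v \<otimes> (v \<otimes> y)) * c (inv (v \<otimes> y) \<otimes> x))"
        by (rule sum_carrier_mult_left[OF v, symmetric])
      also have "\<dots> = (\<Sum>y\<in>carrier G. b y * c (inv y \<otimes> (inv v \<otimes> x)))"
        by (rule sum.cong[OF refl]) (use v x in \<open>simp add: inv_mult_group flip: m_assoc\<close>)
      finally show ?thesis .
    qed
    have "gmult G (gmult G a b) c x
        = (\<Sum>u\<in>carrier G. \<Sum>v\<in>carrier G. a v * (b (inv v \<otimes> u) * c (inv u \<otimes> x)))"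
      using x by (simp add: gmult_def sum_distrib_right mult.assoc)
    also have "\<dots> = (\<Sum>v\<in>carrier G. \<Sum>u\<in>carrier G. a v * (b (inv v \<otimes> u) * c (inv u \<otimes> x)))"
      by (rule sum.swap)
    also have "\<dots> = (\<Sum>v\<in>carrier G. a v * gmult G b c (inv v \<otimes> x))"
    proof (rule sum.cong[OF refl])
      fix v assume v: "v \<in> carrier G"
      have "(\<Sum>u\<in>carrier G. a v * (b (inv v \<otimes> u) * c (inv u \<otimes> x)))
          = a v * (\<Sum>u\<in>carrier G. b (inv v \<otimes> u) * c (inv u \<otimes> x))"
        by (rule sum_distrib_left[symmetric])
      also have "\<dots> = a v * gmult G b c (inv v \<otimes> x)"
        using v x by (simp add: gmult_def inner)
      finally show "(\<Sum>u\<in>carrier G. a v * (b (inv v \<otimes> u) * c (inv u \<otimes> x)))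
          = a v * gmult G b c (inv v \<otimes> x)" .
    qed
    also have "\<dots> = gmult G a (gmult G b c) x"
      using x by (simp add: gmult_def)
    finally show ?thesis .
  qed (simp add: gmult_def)
qed

end

locale finite_group = group +
  assumes finite_carrier [simp]: "finite (carrier G)"
begin

lemma gdelta_expansion:
  assumes v: "v \<in> group_alg G"
  shows "v = (\<Sum>g\<in>carrier G. cscale (v g) (gdelta g))"
proof
  fix x
  have "(\<Sum>g\<in>carrier G. cscale (v g) (gdelta g)) x = (\<Sum>g\<in>carrier G. v g * gdelta g x)"
    by (simp add: sum_fun_apply cscale_def)
  also have "\<dots> = (\<Sum>g\<in>carrier G. if g = x then v g else 0)"
    by (rule sum.cong) (auto simp: gdelta_def)
  finally show "v x = (\<Sum>g\<in>carrier G. cscale (v g) (gdelta g)) x"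
    using v by (simp add: sum.delta' group_alg_def)
qed

lemma gmult_gdelta_right:
  assumes w: "w \<in> carrier G"
  shows "gmult G v (gdelta w) = (\<lambda>x. if x \<in> carrier G then v (x \<otimes> inv w) else 0)"
proof
  fix x
  show "gmult G v (gdelta w) x = (if x \<in> carrier G then v (x \<otimes> inv w) else 0)"
  proof (cases "x \<in> carrier G")
    case x: True
    have "(\<Sum>u\<in>carrier G. v u * gdelta w (inv u \<otimes> x))
        = (\<Sum>u\<in>carrier G. if u = x \<otimes> inv w then v u else 0)"
    proof (rule sum.cong[OF refl])
      fix u assume u: "u \<in> carrier G"
      have "inv u \<otimes> x = w \<longleftrightarrow> x = u \<otimes> w" using inv_solve_left'[of w u x] u w x by auto
      also have "\<dots> \<longleftrightarrow> u = x \<otimes> inv w" using inv_solve_right[of u x w] u w x by auto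
      finally show "v u * gdelta w (inv u \<otimes> x) = (if u = x \<otimes> inv w then v u else 0)"
        by (simp add: gdelta_def)
    qed
    thus ?thesis using x w by (simp add: gmult_def sum.delta')
  qed (simp add: gmult_def)
qed

theorem right_ideal_char_idempotent:
  assumes idem: "gmult G e e = e" and w: "w \<in> carrier G"
  shows "right_ideal_char G e w = (\<Sum>g\<in>carrier G. e (g \<otimes> inv w \<otimes> inv g))"
proof -
  interpret E: Vector_Spaces.linear cscale cscale "gmult G e" by (rule linear_gmult_right)
  interpret W: Vector_Spaces.linear cscale cscale "\<lambda>v. gmult G v (gdelta w)" by (rule linear_gmult_left)
  define V where "V = gmult G e ` group_alg G"
  define p where "p g = gmult G e (gdelta g)" for g
  have "right_ideal_char G e w = subspace_trace V (\<lambda>v. gmult G v (gdelta w))"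
    unfolding right_ideal_char_def V_def by (simp add: Setcompr_eq_image)
  also have "\<dots> = (\<Sum>g\<in>carrier G. gmult G (p g) (gdelta w) g)"
  proof (rule subspace_trace_eq_sum_eval[OF finite_carrier])
    show "cs.subspace V"
      unfolding V_def by (rule E.subspace_image[OF subspace_group_alg])
    show "p g \<in> V" if "g \<in> carrier G" for g
      unfolding V_def p_def using that by (intro imageI) (simp add: group_alg_def gdelta_def)
    show "v = (\<Sum>g\<in>carrier G. cscale (v g) (p g))" if "v \<in> V" for v
    proof -
      from \<open>v \<in> V\<close> obtain b where b: "v = gmult G e b" unfolding V_def by blast
      have expansion: "v = (\<Sum>g\<in>carrier G. cscale (v g) (gdelta g))"
        by (rule gdelta_expansion) (simp add: b gmult_in_group_alg)
      have "v = gmult G e v" unfolding b gmult_assoc[symmetric] idem ..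
      also have "\<dots> = gmult G e (\<Sum>g\<in>carrier G. cscale (v g) (gdelta g))"
        using expansion by (rule arg_cong)
      finally show ?thesis by (simp add: E.sum E.scale p_def)
    qed
    show "gmult G v (gdelta w) \<in> V" if "v \<in> V" for v
    proof -
      from \<open>v \<in> V\<close> obtain b where "v = gmult G e b" unfolding V_def by blast
      hence "gmult G v (gdelta w) = gmult G e (gmult G b (gdelta w))" by (simp add: gmult_assoc)
      thus ?thesis unfolding V_def using gmult_in_group_alg by blast
    qed
    show "gmult G (\<Sum>g\<in>carrier G. cscale (a g) (u g)) (gdelta w)
        = (\<Sum>g\<in>carrier G. cscale (a g) (gmult G (u g) (gdelta w)))" for a u
      by (simp add: W.sum W.scale)
  qed
  also have "\<dots> = (\<Sum>g\<in>carrier G. e (g \<otimes> inv w \<otimes> inv g))"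
  proof (rule sum.cong[OF refl])
    fix g assume g: "g \<in> carrier G"
    have "gmult G (p g) (gdelta w) g = p g (g \<otimes> inv w)"
      using g w by (simp add: gmult_gdelta_right)
    also have "\<dots> = e (g \<otimes> inv w \<otimes> inv g)"
      using g w by (simp add: p_def gmult_gdelta_right)
    finally show "gmult G (p g) (gdelta w) g = e (g \<otimes> inv w \<otimes> inv g)" .
  qed
  finally show ?thesis .
qed

lemma gmult_avg_carrier_right:
  "gmult G a (avg_elt (carrier G)) = cscale (\<Sum>u\<in>carrier G. a u) (avg_elt (carrier G))"
  by (auto simp: gmult_def avg_elt_def cscale_def sum_distrib_right fun_eq_iff)

lemma gmult_avg_carrier_left:
  "gmult G (avg_elt (carrier G)) b = cscale (\<Sum>u\<in>carrier G. b u) (avg_elt (carrier G))"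
proof
  fix x
  show "gmult G (avg_elt (carrier G)) b x = cscale (\<Sum>u\<in>carrier G. b u) (avg_elt (carrier G)) x"
  proof (cases "x \<in> carrier G")
    case x: True
    have "(\<Sum>u\<in>carrier G. avg_elt (carrier G) u * b (inv u \<otimes> x))
        = (\<Sum>u\<in>carrier G. b (inv u \<otimes> x)) / of_nat (card (carrier G))"
      by (simp add: avg_elt_def sum_divide_distrib)
    also have "(\<Sum>u\<in>carrier G. b (inv u \<otimes> x)) = (\<Sum>u\<in>carrier G. b u)"
      by (rule sum_carrier_inv_mult[OF x])
    finally show ?thesis using x by (simp add: gmult_def cscale_def avg_elt_def)
  qed (simp add: gmult_def cscale_def avg_elt_def)
qed

lemma avg_elt_idempotent:
  assumes K: "subgroup K G"
  shows "gmult G (avg_elt K) (avg_elt K) = avg_elt K"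
proof
  fix x
  have KG: "K \<subseteq> carrier G" and K_ne: "K \<noteq> {}"
    using subgroup.subset[OF K] subgroup.one_closed[OF K] by auto
  have finK: "finite K" using KG by (rule finite_subset) simp
  show "gmult G (avg_elt K) (avg_elt K) x = avg_elt K x"
  proof (cases "x \<in> carrier G")
    case x: True
    have "(\<Sum>u\<in>carrier G. avg_elt K u * avg_elt K (inv u \<otimes> x))
        = (\<Sum>u\<in>carrier G. if u \<in> K then avg_elt K (inv u \<otimes> x) / of_nat (card K) else 0)"
      by (rule sum.cong) (auto simp: avg_elt_def)
    also have "\<dots> = (\<Sum>u\<in>K. avg_elt K (inv u \<otimes> x)) / of_nat (card K)"
      using KG by (simp add: sum.inter_restrict[symmetric] Int_absorb1 sum_divide_distrib)
    also have "(\<Sum>u\<in>K. avg_elt K (inv u \<otimes> x)) = (if x \<in> K then 1 else 0)"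
    proof (cases "x \<in> K")
      case True
      hence "inv u \<otimes> x \<in> K" if "u \<in> K" for u
        using K that by (simp add: subgroup.m_closed subgroup.m_inv_closed)
      hence "(\<Sum>u\<in>K. avg_elt K (inv u \<otimes> x)) = (\<Sum>u\<in>K. 1 / of_nat (card K))"
        by (simp add: avg_elt_def)
      thus ?thesis using True finK K_ne by simp
    next
      case False
      have "inv u \<otimes> x \<notin> K" if u: "u \<in> K" for u
      proof
        assume "inv u \<otimes> x \<in> K"
        hence "u \<otimes> (inv u \<otimes> x) \<in> K" using K u by (simp add: subgroup.m_closed)
        thus False using False u KG x by (auto simp flip: m_assoc)
      qed
      thus ?thesis using False by (simp add: avg_elt_def)
    qed
    finally show ?thesis using x by (simp add: gmult_def avg_elt_def)
  qed (use KG in \<open>auto simp: gmult_def avg_elt_def\<close>)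
qed

theorem right_ideal_char_avg_diff:
  assumes K: "subgroup K G" and w: "w \<in> carrier G"
  shows "right_ideal_char G (avg_elt K - avg_elt (carrier G)) w = ind_triv G K w - 1"
proof -
  have KG: "K \<subseteq> carrier G" and K1: "\<one> \<in> K"
    using subgroup.subset[OF K] subgroup.one_closed[OF K] by auto
  have sum_K: "(\<Sum>u\<in>carrier G. avg_elt K u) = 1"
    using KG K1 by (intro sum_avg_elt) auto
  have sum_G: "(\<Sum>u\<in>carrier G. avg_elt (carrier G) u) = 1"
    by (intro sum_avg_elt) auto
  let ?e = "avg_elt K - avg_elt (carrier G)"
  interpret L: Vector_Spaces.linear cscale cscale "\<lambda>a. gmult G a ?e" by (rule linear_gmult_left)
  interpret R1: Vector_Spaces.linear cscale cscale "gmult G (avg_elt K)" by (rule linear_gmult_right)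
  interpret R2: Vector_Spaces.linear cscale cscale "gmult G (avg_elt (carrier G))"
    by (rule linear_gmult_right)
  have "gmult G ?e ?e = ?e"
    by (simp add: L.diff R1.diff R2.diff avg_elt_idempotent[OF K]
                  gmult_avg_carrier_left gmult_avg_carrier_right sum_subtractf sum_K sum_G
                  cscale_def fun_eq_iff)
  hence "right_ideal_char G ?e w = (\<Sum>g\<in>carrier G. ?e (g \<otimes> inv w \<otimes> inv g))"
    using w by (rule right_ideal_char_idempotent)
  also have "\<dots> = (\<Sum>g\<in>carrier G. (if g \<otimes> inv w \<otimes> inv g \<in> K then 1 else 0) / of_nat (card K)
                                     - avg_elt (carrier G) g)"
    using w by (intro sum.cong) (auto simp: avg_elt_def)
  also have "\<dots> = (\<Sum>g\<in>carrier G. if g \<otimes> inv w \<otimes> inv g \<in> K then 1 else 0) / of_nat (card K) - 1"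
    by (simp add: sum_subtractf sum_divide_distrib sum_G)
  also have "\<dots> = ind_triv G K w - 1"
    by (simp add: ind_triv_def sum_conj_mem_subgroup[OF K w])
  finally show ?thesis .
qed

end

section \<open>Lengths in a dihedral group\<close>

text \<open>\<open>dih_len M j b\<close> is the length of \<open>(st)\<^sup>j s\<^sup>b\<close> (\<open>0 \<le> j < M\<close>) in the dihedral group of order
  \<open>2M\<close>; left multiplication by \<open>s\<close> resp. \<open>t\<close> turns \<open>(st)\<^sup>j s\<^sup>b\<close> into \<open>(st)\<^sup>j\<^sup>' s\<^sup>1\<^sup>-\<^sup>b\<close> with
  \<open>j' = s_idx M j\<close> resp. \<open>j' = t_idx M j\<close>.\<close>
definition dih_len :: "int \<Rightarrow> int \<Rightarrow> bool \<Rightarrow> int" where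
  "dih_len M j b = (if b then min (2 * j + 1) (2 * (M - j) - 1) else 2 * min j (M - j))"

definition s_idx :: "int \<Rightarrow> int \<Rightarrow> int" where
  "s_idx M j = (if j = 0 then 0 else M - j)"

definition t_idx :: "int \<Rightarrow> int \<Rightarrow> int" where
  "t_idx M j = M - 1 - j"

lemma dvd_iff_small_multiple:
  fixes M a :: int
  assumes M: "0 < M" and a: "- 2 * M < a" "a \<le> 2 * M"
  shows "M dvd a \<longleftrightarrow> a = - M \<or> a = 0 \<or> a = M \<or> a = 2 * M"
proof
  assume "M dvd a"
  then obtain q where q: "a = M * q" by (auto elim: dvdE)
  have "-2 < q" using mult_less_cancel_left_pos[OF M, of "-2" q] a q by simp
  moreover have "q < 3" using mult_less_cancel_left_pos[OF M, of q 3] a q by linarith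
  ultimately have "q = -1 \<or> q = 0 \<or> q = 1 \<or> q = 2" by presburger
  thus "a = - M \<or> a = 0 \<or> a = M \<or> a = 2 * M" using q by auto
qed auto

context
  fixes M j :: int
  assumes j: "0 \<le> j" "j < M" and M: "2 \<le> M"
begin

lemma s_idx_range: "0 \<le> s_idx M j \<and> s_idx M j < M \<and> s_idx M (s_idx M j) = j"
  using j M unfolding s_idx_def by presburger

lemma t_idx_range: "0 \<le> t_idx M j \<and> t_idx M j < M \<and> t_idx M (t_idx M j) = j"
  using j M unfolding t_idx_def by presburger

lemma dih_len_nonneg: "0 \<le> dih_len M j b"
  using j M unfolding dih_len_def by (cases b) auto

lemma dih_len_eq_0_iff: "dih_len M j b = 0 \<longleftrightarrow> j = 0 \<and> \<not> b"
  using j M unfolding dih_len_def by (cases b) auto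

lemma dih_len_s_idx: "\<bar>dih_len M (s_idx M j) (\<not> b) - dih_len M j b\<bar> = 1"
  using j M unfolding dih_len_def s_idx_def min_def by (cases b; simp; presburger)

lemma dih_len_t_idx: "\<bar>dih_len M (t_idx M j) (\<not> b) - dih_len M j b\<bar> = 1"
  using j M unfolding dih_len_def t_idx_def min_def by (cases b; simp; presburger)

lemma dih_len_descent:
  "0 < dih_len M j b \<Longrightarrow>
     dih_len M (s_idx M j) (\<not> b) < dih_len M j b \<or> dih_len M (t_idx M j) (\<not> b) < dih_len M j b"
  using j M unfolding dih_len_def s_idx_def t_idx_def min_def by (cases b; auto; presburger)

lemma dih_len_le: "dih_len M j b \<le> M"
  using j M unfolding dih_len_def min_def by (cases b; simp; presburger)

lemma dih_len_eq_iff: "dih_len M j b = M \<longleftrightarrow> j = M div 2 \<and> b = odd M"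
  using j M unfolding dih_len_def min_def by (cases b; simp; presburger)

lemma dih_len_two_descents:
  "dih_len M (s_idx M j) (\<not> b) < dih_len M j b \<and> dih_len M (t_idx M j) (\<not> b) < dih_len M j b
     \<longleftrightarrow> dih_len M j b = M"
  using j M unfolding dih_len_def s_idx_def t_idx_def min_def by (cases b; simp; presburger)

lemma dih_len_two_ascents:
  "dih_len M j b < dih_len M (s_idx M j) (\<not> b) \<and> dih_len M j b < dih_len M (t_idx M j) (\<not> b)
     \<longleftrightarrow> j = 0 \<and> \<not> b"
  using j M unfolding dih_len_def s_idx_def t_idx_def min_def by (cases b; simp; presburger)

text \<open>For \<open>x = (st)\<^sup>j s\<^sup>b\<close> one has \<open>x\<inverse> s x = (st)\<^sup>c s\<close>, which lies in \<open>{s, t}\<close> iff \<open>M\<close> divides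
  \<open>c\<close> or \<open>c + 1\<close>; so the right-hand side lists \<open>X\<^sub>s \<inter> X\<^sub>s\<^sup>\<sharp>\<close>.\<close>
lemma dih_len_s_ascent_sharp:
  assumes c: "c = (if b then j + j else - j - j)"
  shows "dih_len M j b < dih_len M (s_idx M j) (\<not> b) \<and> (M dvd c \<or> M dvd (c + 1))
     \<longleftrightarrow> (j = 0 \<and> \<not> b) \<or> (j = (M + 1) div 2 \<and> b = even M)"
proof -
  have "M dvd c \<longleftrightarrow> c = - M \<or> c = 0 \<or> c = M \<or> c = 2 * M"
    and "M dvd (c + 1) \<longleftrightarrow> c + 1 = - M \<or> c + 1 = 0 \<or> c + 1 = M \<or> c + 1 = 2 * M"
    using j M c by (intro dvd_iff_small_multiple; auto)+
  thus ?thesis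
    using j M c unfolding dih_len_def s_idx_def min_def by (cases b; auto; presburger)
qed

end

lemma sum_Pow_doubleton:
  assumes "a \<noteq> b"
  shows "(\<Sum>L\<in>Pow {a, b}. F L) = F {} + F {a} + F {b} + F {a, b}"
proof -
  have "Pow {a, b} = {{}, {a}, {b}, {a, b}}" by blast
  thus ?thesis using assms by (simp add: add.assoc)
qed

section \<open>Dihedral groups\<close>

locale dihedral = group G for G :: "('a, 'b) monoid_scheme" (structure) +
  fixes s t :: 'a and m :: nat
  assumes s_closed [simp]: "s \<in> carrier G" and t_closed [simp]: "t \<in> carrier G"
    and generate_st: "carrier G = generate G {s, t}"
    and s_ne_one: "s \<noteq> \<one>" and t_ne_one: "t \<noteq> \<one>"
    and s_involution: "s \<otimes> s = \<one>" and t_involution: "t \<otimes> t = \<one>"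
    and two_le_m: "2 \<le> m"
    and st_pow_m: "(s \<otimes> t) [^] m = \<one>"
    and st_pow_ne_one: "\<forall>k. 0 < k \<and> k < m \<longrightarrow> (s \<otimes> t) [^] k \<noteq> \<one>"
begin

lemma inv_s [simp]: "inv s = s"
  using s_involution by (simp add: inv_equality)

lemma inv_t [simp]: "inv t = t"
  using t_involution by (simp add: inv_equality)

lemma dihedral_swap: "dihedral G t s m"
proof -
  have ts: "t \<otimes> s = inv (s \<otimes> t)" by (simp add: inv_mult_group)
  have "(t \<otimes> s) [^] k = \<one> \<longleftrightarrow> (s \<otimes> t) [^] k = \<one>" for k :: nat
    unfolding ts by (simp add: nat_pow_inv)
  thus ?thesis
    using generate_st s_ne_one t_ne_one s_involution t_involution two_le_m st_pow_m st_pow_ne_one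
    by unfold_locales (simp_all add: insert_commute generate.incl)
qed

definition r :: 'a where "r = s \<otimes> t"

definition nf :: "int \<Rightarrow> bool \<Rightarrow> 'a" where
  "nf k b = r [^] k \<otimes> (if b then s else \<one>)"

lemma r_closed [simp]: "r \<in> carrier G"
  by (simp add: r_def)

lemma nf_closed [simp]: "nf k b \<in> carrier G"
  by (simp add: nf_def)

lemma s_mult_r: "s \<otimes> r = inv r \<otimes> s"
proof -
  have "s \<otimes> r = t" by (simp add: r_def s_involution flip: m_assoc)
  moreover have "inv r \<otimes> s = t" by (simp add: r_def inv_mult_group m_assoc s_involution)
  ultimately show ?thesis by simp
qed

lemma s_mult_r_pow_nat: "s \<otimes> r [^] (n::nat) = r [^] (- int n) \<otimes> s"
proof (induct n)
  case (Suc n)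
  have "s \<otimes> r [^] Suc n = (s \<otimes> r [^] n) \<otimes> r" by (simp add: m_assoc)
  also have "\<dots> = r [^] (- int n) \<otimes> (inv r \<otimes> s)" by (simp add: Suc m_assoc s_mult_r)
  also have "\<dots> = (r [^] (- int n) \<otimes> inv r) \<otimes> s" by (simp add: m_assoc)
  also have "r [^] (- int n) \<otimes> inv r = r [^] (- int (Suc n))"
  proof -
    have "r [^] (- int (Suc n)) = r [^] (- int n + -1)"
      by (rule arg_cong[where f = "\<lambda>k. r [^] k"]) simp
    also have "\<dots> = r [^] (- int n) \<otimes> r [^] (-1::int)" by (rule int_pow_mult) simp
    finally show ?thesis by (simp add: int_pow_neg)
  qed
  finally show ?case by (simp add: m_assoc)
qed simp

lemma s_mult_r_pow: "s \<otimes> r [^] (k::int) = r [^] (- k) \<otimes> s"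
proof (cases "0 \<le> k")
  case True
  then obtain n where "k = int n" by (metis nonneg_eq_int)
  thus ?thesis by (simp add: s_mult_r_pow_nat int_pow_int)
next
  case False
  then obtain n where k: "k = - int n" by (metis neg_int_cases not_le)
  have "s \<otimes> r [^] (- int n) = s \<otimes> (s \<otimes> r [^] n \<otimes> s)"
    by (simp add: s_mult_r_pow_nat m_assoc s_involution)
  also have "\<dots> = r [^] n \<otimes> s"
    by (simp add: s_involution flip: m_assoc)
  finally show ?thesis by (simp add: k int_pow_int)
qed

lemma nf_mult: "nf k b \<otimes> nf k' b' = nf (if b then k - k' else k + k') (b \<noteq> b')"
proof (cases b)
  case True
  have "nf k b \<otimes> nf k' b' = r [^] k \<otimes> (s \<otimes> r [^] k') \<otimes> (if b' then s else \<one>)"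
    using True by (simp add: nf_def m_assoc)
  also have "\<dots> = r [^] k \<otimes> r [^] (- k') \<otimes> (s \<otimes> (if b' then s else \<one>))"
    by (simp add: s_mult_r_pow m_assoc)
  also have "r [^] k \<otimes> r [^] (- k') = r [^] (k - k')"
    using int_pow_mult[OF r_closed, of k "- k'"] by simp
  finally show ?thesis using True by (auto simp: nf_def s_involution)
next
  case False
  thus ?thesis by (auto simp: nf_def m_assoc int_pow_mult)
qed

lemma nf_one: "nf 0 False = \<one>"
  by (simp add: nf_def)

lemma nf_s: "nf 0 True = s"
  by (simp add: nf_def)

lemma nf_t: "nf (-1) True = t"
proof -
  have "nf (-1) True = inv r \<otimes> s" by (simp add: nf_def int_pow_neg)
  also have "\<dots> = t" by (simp add: r_def inv_mult_group m_assoc s_involution)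
  finally show ?thesis .
qed

lemma r_pow_mod: "r [^] (k mod int m) = r [^] k"
proof -
  have "r [^] k = r [^] (int m * (k div int m)) \<otimes> r [^] (k mod int m)"
    by (simp add: int_pow_mult[symmetric])
  also have "r [^] (int m * (k div int m)) = \<one>"
    by (simp add: int_pow_pow[symmetric] int_pow_int r_def st_pow_m)
  finally show ?thesis by simp
qed

lemma r_pow_eq_one_iff: "r [^] k = \<one> \<longleftrightarrow> k mod int m = 0"
proof
  assume "r [^] k = \<one>"
  define n where "n = nat (k mod int m)"
  have n: "int n = k mod int m" using two_le_m by (simp add: n_def)
  have "r [^] n = \<one>"
    using \<open>r [^] k = \<one>\<close> r_pow_mod[of k] by (simp flip: n int_pow_int)
  moreover have "n < m" using two_le_m by (simp add: n_def nat_less_iff)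
  ultimately have "n = 0" using st_pow_ne_one[rule_format, of n] by (auto simp: r_def)
  thus "k mod int m = 0" using n by simp
qed (use r_pow_mod[of k] in simp)

lemma r_pow_ne_s: "r [^] (k::int) \<noteq> s"
proof
  assume h: "r [^] k = s"
  have "s \<otimes> r = r \<otimes> s"
    using h int_pow_mult[OF r_closed, of k 1] int_pow_mult[OF r_closed, of 1 k]
    by (simp add: add.commute)
  hence "r = inv r" using s_mult_r by simp
  hence "r \<otimes> r = \<one>" using r_inv[OF r_closed] by metis
  hence "r [^] (2::int) = \<one>"
    using int_pow_mult[OF r_closed, of 1 1] by simp
  hence "int m dvd 2" by (simp add: r_pow_eq_one_iff dvd_eq_mod_eq_0)
  hence "m = 2" using two_le_m zdvd_imp_le[of "int m" 2] by simp
  have "k mod 2 = 0 \<or> k mod 2 = 1" by presburger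
  moreover have "r [^] (k mod 2) = s" using h r_pow_mod[of k] \<open>m = 2\<close> by simp
  ultimately have "r = s" using s_ne_one by auto
  hence "t = \<one>" using l_cancel_one[of s t] by (simp add: r_def)
  thus False using t_ne_one by simp
qed

lemma nf_eq_one_iff: "nf k b = \<one> \<longleftrightarrow> \<not> b \<and> k mod int m = 0"
proof (cases b)
  case True
  have "r [^] k \<otimes> s \<noteq> \<one>"
  proof
    assume "r [^] k \<otimes> s = \<one>"
    hence "inv s = r [^] k" by (rule inv_equality) simp_all
    thus False using r_pow_ne_s[of k] by simp
  qed
  thus ?thesis using True by (simp add: nf_def)
qed (simp add: nf_def r_pow_eq_one_iff)

lemma nf_inv: "inv (nf k b) = nf (if b then k else - k) b"
  by (rule inv_equality) (simp_all add: nf_mult nf_one)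

lemma nf_eq_iff: "nf k b = nf k' b' \<longleftrightarrow> b = b' \<and> k mod int m = k' mod int m"
proof -
  have "nf k b = nf k' b' \<longleftrightarrow> inv (nf k' b') \<otimes> nf k b = \<one>"
    using inv_solve_left'[of \<one> "nf k' b'" "nf k b"] by auto
  also have "\<dots> \<longleftrightarrow> b = b' \<and> (if b' then k' - k else - k' + k) mod int m = 0"
    by (auto simp: nf_inv nf_mult nf_eq_one_iff)
  also have "\<dots> \<longleftrightarrow> b = b' \<and> k mod int m = k' mod int m"
    by (cases b') (auto simp: mod_eq_dvd_iff mod_eq_0_iff_dvd dvd_diff_commute)
  finally show ?thesis .
qed

lemma nf_eq_iff_reduced:
  "0 \<le> j \<Longrightarrow> j < int m \<Longrightarrow> 0 \<le> j' \<Longrightarrow> j' < int m \<Longrightarrow> nf j b = nf j' b' \<longleftrightarrow> j = j' \<and> b = b'"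
  by (auto simp: nf_eq_iff)

lemma carrier_nf: "x \<in> carrier G \<Longrightarrow> \<exists>k b. x = nf k b"
proof -
  assume "x \<in> carrier G"
  hence "x \<in> generate G {s, t}" using generate_st by simp
  thus ?thesis
  proof (induct rule: generate.induct)
    case one thus ?case using nf_one by metis
  next
    case (incl h)
    hence "h = nf 0 True \<or> h = nf (-1) True" using nf_s nf_t by auto
    thus ?case by blast
  next
    case (inv h)
    hence "inv h = nf 0 True \<or> inv h = nf (-1) True" using nf_s nf_t by auto
    thus ?case by blast
  next
    case (eng h1 h2) thus ?case using nf_mult by metis
  qed
qed

lemma carrier_nf_reduced:
  assumes "x \<in> carrier G"
  obtains j b where "0 \<le> j" "j < int m" "x = nf j b"
proof -
  obtain k b where "x = nf k b" using carrier_nf assms by blast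
  hence "x = nf (k mod int m) b" by (simp add: nf_eq_iff)
  thus ?thesis using two_le_m by (intro that[of "k mod int m" b]) auto
qed

lemma carrier_eq_image: "carrier G = (\<lambda>(j, b). nf (int j) b) ` ({..<m} \<times> UNIV)"
proof
  show "carrier G \<subseteq> (\<lambda>(j, b). nf (int j) b) ` ({..<m} \<times> UNIV)"
  proof
    fix x assume "x \<in> carrier G"
    then obtain j b where j: "0 \<le> j" "j < int m" "x = nf j b" by (rule carrier_nf_reduced)
    hence "x = (\<lambda>(j, b). nf (int j) b) (nat j, b)" and "(nat j, b) \<in> {..<m} \<times> UNIV" by auto
    thus "x \<in> (\<lambda>(j, b). nf (int j) b) ` ({..<m} \<times> UNIV)" by blast
  qed
qed auto

lemma card_carrier: "card (carrier G) = 2 * m"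
proof -
  have "inj_on (\<lambda>(j, b). nf (int j) b) ({..<m} \<times> UNIV)"
  proof (rule inj_onI)
    fix p q assume "p \<in> {..<m} \<times> UNIV" "q \<in> {..<m} \<times> UNIV"
      and "(\<lambda>(j, b). nf (int j) b) p = (\<lambda>(j, b). nf (int j) b) q"
    thus "p = q" using nf_eq_iff_reduced by (cases p; cases q) auto
  qed
  hence "card (carrier G) = card ({..<m} \<times> (UNIV :: bool set))"
    unfolding carrier_eq_image by (rule card_image)
  thus ?thesis by (simp add: card_cartesian_product)
qed

sublocale finite_group
proof
  show "finite (carrier G)"
    using card_carrier two_le_m by (intro card_ge_0_finite) simp
qed

abbreviation len :: "'a \<Rightarrow> nat" where
  "len \<equiv> cox_len G {s, t}"

abbreviation nf_len :: "int \<Rightarrow> bool \<Rightarrow> int" where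
  "nf_len \<equiv> dih_len (int m)"

lemma two_le_int_m: "2 \<le> int m"
  using two_le_m by simp

lemma nf_add_m: "nf (k + int m) b = nf k b"
  by (simp add: nf_eq_iff)

lemma s_mult_nf: "s \<otimes> nf j b = nf (s_idx (int m) j) (\<not> b)"
  using nf_mult[of 0 True j b] nf_add_m[of "- j"] by (auto simp: nf_s s_idx_def)

lemma t_mult_nf: "t \<otimes> nf j b = nf (t_idx (int m) j) (\<not> b)"
proof -
  have "t_idx (int m) j = (- 1 - j) + int m" by (simp add: t_idx_def)
  thus ?thesis using nf_mult[of "-1" True j b] by (simp add: nf_t nf_add_m)
qed

lemma word_closed: "set ws \<subseteq> {s, t} \<Longrightarrow> foldr (\<otimes>) ws \<one> \<in> carrier G"
  by (induct ws) auto

lemma dih_len_le_word_length: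
  "set ws \<subseteq> {s, t} \<Longrightarrow> 0 \<le> j \<Longrightarrow> j < int m \<Longrightarrow> foldr (\<otimes>) ws \<one> = nf j b
     \<Longrightarrow> nf_len j b \<le> int (length ws)"
proof (induct ws arbitrary: j b)
  case Nil
  hence "nf j b = nf 0 False" by (simp add: nf_one)
  hence "j = 0 \<and> \<not> b" using Nil two_le_m by (simp add: nf_eq_iff_reduced)
  thus ?case by (simp add: dih_len_def)
next
  case (Cons g ws)
  obtain j' b' where j': "0 \<le> j'" "j' < int m" "foldr (\<otimes>) ws \<one> = nf j' b'"
    using carrier_nf_reduced[OF word_closed] Cons.prems(1) by (metis insert_subset list.simps(15))
  have IH: "nf_len j' b' \<le> int (length ws)" using Cons j' by simp
  have "g = s \<or> g = t" using Cons.prems(1) by simp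
  hence "(j = s_idx (int m) j' \<and> nf_len j b = nf_len (s_idx (int m) j') (\<not> b'))
       \<or> (j = t_idx (int m) j' \<and> nf_len j b = nf_len (t_idx (int m) j') (\<not> b'))"
  proof
    assume "g = s"
    hence "nf j b = nf (s_idx (int m) j') (\<not> b')" using Cons.prems j' s_mult_nf by simp
    thus ?thesis using s_idx_range[OF j'(1,2) two_le_int_m] Cons.prems by (simp add: nf_eq_iff_reduced)
  next
    assume "g = t"
    hence "nf j b = nf (t_idx (int m) j') (\<not> b')" using Cons.prems j' t_mult_nf by simp
    thus ?thesis using t_idx_range[OF j'(1,2) two_le_int_m] Cons.prems by (simp add: nf_eq_iff_reduced)
  qed
  thus ?case
    using IH dih_len_s_idx[OF j'(1,2) two_le_int_m, of b'] dih_len_t_idx[OF j'(1,2) two_le_int_m, of b']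
    by auto
qed

lemma word_of_dih_len:
  "0 \<le> j \<Longrightarrow> j < int m \<Longrightarrow> nf_len j b = int n \<Longrightarrow>
     \<exists>ws. set ws \<subseteq> {s, t} \<and> length ws = n \<and> foldr (\<otimes>) ws \<one> = nf j b"
proof (induct n arbitrary: j b)
  case 0
  hence "j = 0 \<and> \<not> b" using dih_len_eq_0_iff[OF _ _ two_le_int_m] by simp
  thus ?case by (intro exI[of _ "[]"]) (simp add: nf_one)
next
  case (Suc n)
  note j = Suc.prems(1,2)
  have "nf_len (s_idx (int m) j) (\<not> b) < nf_len j b \<or> nf_len (t_idx (int m) j) (\<not> b) < nf_len j b"
    using dih_len_descent[OF j two_le_int_m, of b] Suc.prems by simp
  thus ?case
  proof
    assume "nf_len (s_idx (int m) j) (\<not> b) < nf_len j b"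
    hence "nf_len (s_idx (int m) j) (\<not> b) = int n"
      using dih_len_s_idx[OF j two_le_int_m, of b] Suc.prems by auto
    then obtain ws where ws: "set ws \<subseteq> {s, t}" "length ws = n"
        "foldr (\<otimes>) ws \<one> = nf (s_idx (int m) j) (\<not> b)"
      using Suc.hyps s_idx_range[OF j two_le_int_m] by blast
    have "s \<otimes> nf (s_idx (int m) j) (\<not> b) = nf j b"
      using s_mult_nf s_idx_range[OF j two_le_int_m] by simp
    thus ?case using ws by (intro exI[of _ "s # ws"]) auto
  next
    assume "nf_len (t_idx (int m) j) (\<not> b) < nf_len j b"
    hence "nf_len (t_idx (int m) j) (\<not> b) = int n"
      using dih_len_t_idx[OF j two_le_int_m, of b] Suc.prems by auto
    then obtain ws where ws: "set ws \<subseteq> {s, t}" "length ws = n"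
        "foldr (\<otimes>) ws \<one> = nf (t_idx (int m) j) (\<not> b)"
      using Suc.hyps t_idx_range[OF j two_le_int_m] by blast
    have "t \<otimes> nf (t_idx (int m) j) (\<not> b) = nf j b"
      using t_mult_nf t_idx_range[OF j two_le_int_m] by simp
    thus ?case using ws by (intro exI[of _ "t # ws"]) auto
  qed
qed

lemma len_nf: "0 \<le> j \<Longrightarrow> j < int m \<Longrightarrow> len (nf j b) = nat (nf_len j b)"
  unfolding cox_len_def
proof (rule Least_equality)
  assume j: "0 \<le> j" "j < int m"
  show "\<exists>ws. set ws \<subseteq> {s, t} \<and> length ws = nat (nf_len j b) \<and> foldr (\<otimes>) ws \<one> = nf j b"
    using word_of_dih_len[OF j] dih_len_nonneg[OF j two_le_int_m, of b] by simp
  fix n assume "\<exists>ws. set ws \<subseteq> {s, t} \<and> length ws = n \<and> foldr (\<otimes>) ws \<one> = nf j b"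
  thus "nat (nf_len j b) \<le> n" using dih_len_le_word_length[OF _ j] by force
qed

definition w0 :: 'a where
  "w0 = nf (int m div 2) (odd m)"

lemma w0_closed [simp]: "w0 \<in> carrier G"
  by (simp add: w0_def)

lemma nf_eq_w0_iff:
  assumes "0 \<le> j" "j < int m"
  shows "nf j b = w0 \<longleftrightarrow> j = int m div 2 \<and> b = odd m"
proof -
  have half: "0 \<le> int m div 2" "int m div 2 < int m" using two_le_m by auto
  show ?thesis unfolding w0_def using nf_eq_iff_reduced[OF assms half] by simp
qed

lemma len_le_m: "x \<in> carrier G \<Longrightarrow> len x \<le> m"
proof (elim carrier_nf_reduced)
  fix j b assume j: "0 \<le> j" "j < int m" and "x = nf j b"
  thus "len x \<le> m" using len_nf[OF j] dih_len_le[OF j two_le_int_m, of b] by (simp add: nat_le_iff)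
qed

lemma len_eq_m_iff: "x \<in> carrier G \<Longrightarrow> len x = m \<longleftrightarrow> x = w0"
proof (elim carrier_nf_reduced)
  fix j b assume j: "0 \<le> j" "j < int m" and x: "x = nf j b"
  have "len x = m \<longleftrightarrow> nf_len j b = int m"
    using x len_nf[OF j] dih_len_nonneg[OF j two_le_int_m, of b] by auto
  thus ?thesis using dih_len_eq_iff[OF j two_le_int_m] nf_eq_w0_iff[OF j] x by simp
qed

lemma longest_elt_eq_w0: "longest_elt G {s, t} = w0"
  unfolding longest_elt_def
proof (rule the_equality)
  show "w0 \<in> carrier G \<and> (\<forall>v\<in>carrier G. len v \<le> len w0)"
    using len_le_m len_eq_m_iff[OF w0_closed] by simp
  fix w assume w: "w \<in> carrier G \<and> (\<forall>v\<in>carrier G. len v \<le> len w)"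
  hence "len w = m" using len_le_m[of w] len_le_m len_eq_m_iff[OF w0_closed] w0_closed by fastforce
  thus "w = w0" using len_eq_m_iff w by blast
qed

lemma w0_ne_one: "w0 \<noteq> \<one>"
proof -
  have "int m div 2 \<noteq> 0" using two_le_m by presburger
  thus ?thesis using nf_eq_w0_iff[of 0 False] two_le_m by (simp add: nf_one)
qed

lemma w0_involution: "w0 \<otimes> w0 = \<one>"
proof (cases "odd m")
  case False
  hence "int m div 2 + int m div 2 = int m" by presburger
  thus ?thesis using False by (simp add: w0_def nf_mult nf_eq_one_iff)
qed (simp add: w0_def nf_mult nf_one)

lemma inv_w0 [simp]: "inv w0 = w0"
  using w0_involution by (simp add: inv_equality)

lemma generate_w0: "generate G {w0} = {\<one>, w0}"
proof
  show "generate G {w0} \<subseteq> {\<one>, w0}"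
  proof
    fix x assume "x \<in> generate G {w0}"
    thus "x \<in> {\<one>, w0}"
      by (induct rule: generate.induct) (auto simp: w0_involution)
  qed
  show "{\<one>, w0} \<subseteq> generate G {w0}" by (auto intro: generate.one generate.incl)
qed

lemma idx_ranges:
  assumes "0 \<le> j" "j < int m"
  shows "0 \<le> s_idx (int m) j" "s_idx (int m) j < int m" "0 \<le> t_idx (int m) j" "t_idx (int m) j < int m"
  using s_idx_range[OF assms two_le_int_m] t_idx_range[OF assms two_le_int_m] by simp_all

lemma nf_mem_X_s:
  assumes j: "0 \<le> j" "j < int m"
  shows "nf j b \<in> X_set G {s, t} {s} \<longleftrightarrow> nf_len j b < nf_len (s_idx (int m) j) (\<not> b)"
proof -
  have "nf j b \<in> X_set G {s, t} {s} \<longleftrightarrow> nat (nf_len j b) < nat (nf_len (s_idx (int m) j) (\<not> b))"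
    using len_nf[OF j] len_nf[OF idx_ranges(1,2)[OF j]] by (simp add: X_set_def s_mult_nf)
  thus ?thesis using dih_len_nonneg[OF j two_le_int_m, of b] by (auto simp: nat_less_eq_zless)
qed

lemma nf_mem_X_t:
  assumes j: "0 \<le> j" "j < int m"
  shows "nf j b \<in> X_set G {s, t} {t} \<longleftrightarrow> nf_len j b < nf_len (t_idx (int m) j) (\<not> b)"
proof -
  have "nf j b \<in> X_set G {s, t} {t} \<longleftrightarrow> nat (nf_len j b) < nat (nf_len (t_idx (int m) j) (\<not> b))"
    using len_nf[OF j] len_nf[OF idx_ranges(3,4)[OF j]] by (simp add: X_set_def t_mult_nf)
  thus ?thesis using dih_len_nonneg[OF j two_le_int_m, of b] by (auto simp: nat_less_eq_zless)
qed

lemma X_set_doubleton: "X_set G {s, t} {s, t} = X_set G {s, t} {s} \<inter> X_set G {s, t} {t}"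
  by (auto simp: X_set_def)

lemma X_set_full: "X_set G {s, t} {s, t} = {\<one>}"
proof -
  have "x \<in> X_set G {s, t} {s, t} \<longleftrightarrow> x = \<one>" if "x \<in> carrier G" for x
  proof (rule carrier_nf_reduced[OF that])
    fix j b assume j: "0 \<le> j" "j < int m" and x: "x = nf j b"
    have "x = \<one> \<longleftrightarrow> j = 0 \<and> \<not> b"
      using x nf_eq_iff_reduced[OF j, of 0 b False] two_le_m by (simp add: nf_one)
    thus ?thesis
      using x X_set_doubleton nf_mem_X_s[OF j] nf_mem_X_t[OF j]
            dih_len_two_ascents[OF j two_le_int_m] by auto
  qed
  thus ?thesis by (auto simp: X_set_def)
qed

lemma not_mem_X_s_X_t_iff:
  assumes x: "x \<in> carrier G"
  shows "x \<notin> X_set G {s, t} {s} \<and> x \<notin> X_set G {s, t} {t} \<longleftrightarrow> x = w0"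
proof (rule carrier_nf_reduced[OF x])
  fix j b assume j: "0 \<le> j" "j < int m" and x: "x = nf j b"
  have "\<not> nf_len j b < nf_len (s_idx (int m) j) (\<not> b) \<longleftrightarrow> nf_len (s_idx (int m) j) (\<not> b) < nf_len j b"
    using dih_len_s_idx[OF j two_le_int_m, of b] by arith
  hence "x \<notin> X_set G {s, t} {s} \<longleftrightarrow> nf_len (s_idx (int m) j) (\<not> b) < nf_len j b"
    using nf_mem_X_s[OF j, of b] unfolding x by blast
  moreover have "\<not> nf_len j b < nf_len (t_idx (int m) j) (\<not> b) \<longleftrightarrow> nf_len (t_idx (int m) j) (\<not> b) < nf_len j b"
    using dih_len_t_idx[OF j two_le_int_m, of b] by arith
  hence "x \<notin> X_set G {s, t} {t} \<longleftrightarrow> nf_len (t_idx (int m) j) (\<not> b) < nf_len j b"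
    using nf_mem_X_t[OF j, of b] unfolding x by blast
  ultimately have "x \<notin> X_set G {s, t} {s} \<and> x \<notin> X_set G {s, t} {t} \<longleftrightarrow> nf_len j b = int m"
    using dih_len_two_descents[OF j two_le_int_m, of b] by blast
  also have "\<dots> \<longleftrightarrow> j = int m div 2 \<and> b = odd (int m)"
    by (rule dih_len_eq_iff[OF j two_le_int_m])
  also have "\<dots> \<longleftrightarrow> x = w0"
    using nf_eq_w0_iff[OF j, of b] x by simp
  finally show ?thesis .
qed

lemma len_mult_generator_ne:
  assumes x: "x \<in> carrier G" and g: "g \<in> {s, t}"
  shows "len (g \<otimes> x) \<noteq> len x"
proof (rule carrier_nf_reduced[OF x])
  fix j b assume j: "0 \<le> j" "j < int m" and x: "x = nf j b"
  obtain j' where j': "0 \<le> j'" "j' < int m" and gx: "g \<otimes> x = nf j' (\<not> b)"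
    and step: "\<bar>nf_len j' (\<not> b) - nf_len j b\<bar> = 1"
  proof (cases "g = s")
    case True
    thus ?thesis using that[OF idx_ranges(1,2)[OF j]] x s_mult_nf dih_len_s_idx[OF j two_le_int_m] by simp
  next
    case False
    hence "g = t" using g by simp
    thus ?thesis using that[OF idx_ranges(3,4)[OF j]] x t_mult_nf dih_len_t_idx[OF j two_le_int_m] by simp
  qed
  show ?thesis
    using gx x len_nf[OF j] len_nf[OF j'] step
          dih_len_nonneg[OF j two_le_int_m, of b] dih_len_nonneg[OF j' two_le_int_m, of "\<not> b"]
    by (auto simp: nat_eq_iff)
qed

text \<open>Left multiplication by a generator \<open>g\<close> changes the length, hence swaps \<open>X\<^sub>g\<close> with its
  complement.\<close>
lemma card_X_set_singleton:
  assumes g: "g \<in> {s, t}"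
  shows "card (X_set G {s, t} {g}) = m"
proof -
  let ?A = "X_set G {s, t} {g}"
  have gc: "g \<in> carrier G" using g by auto
  have gg: "g \<otimes> (g \<otimes> x) = x" if "x \<in> carrier G" for x
    using g that s_involution t_involution by (auto simp flip: m_assoc)
  have A_sub: "?A \<subseteq> carrier G" by (auto simp: X_set_def)
  have mem_A: "x \<in> ?A \<longleftrightarrow> len x < len (g \<otimes> x)" if "x \<in> carrier G" for x
    using that by (simp add: X_set_def)
  have "bij_betw (\<lambda>x. g \<otimes> x) ?A (carrier G - ?A)"
  proof (rule bij_betw_byWitness[where f' = "\<lambda>x. g \<otimes> x"])
    show "\<forall>x\<in>?A. g \<otimes> (g \<otimes> x) = x" and "\<forall>x\<in>carrier G - ?A. g \<otimes> (g \<otimes> x) = x"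
      using gg A_sub by auto
    show "(\<lambda>x. g \<otimes> x) ` ?A \<subseteq> carrier G - ?A"
    proof
      fix y assume "y \<in> (\<lambda>x. g \<otimes> x) ` ?A"
      then obtain x where x: "x \<in> ?A" and y: "y = g \<otimes> x" by blast
      have xc: "x \<in> carrier G" using x A_sub by blast
      have "\<not> len y < len (g \<otimes> y)" using mem_A[OF xc] x gg[OF xc] y by simp
      thus "y \<in> carrier G - ?A" using mem_A[of y] y gc xc by simp
    qed
    show "(\<lambda>x. g \<otimes> x) ` (carrier G - ?A) \<subseteq> ?A"
    proof
      fix y assume "y \<in> (\<lambda>x. g \<otimes> x) ` (carrier G - ?A)"
      then obtain x where x: "x \<in> carrier G" "x \<notin> ?A" and y: "y = g \<otimes> x" by blast
      have "len (g \<otimes> x) < len x"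
        using mem_A[OF x(1)] x(2) len_mult_generator_ne[OF x(1) g] by linarith
      thus "y \<in> ?A" using mem_A[of y] y gg[OF x(1)] gc x(1) by simp
    qed
  qed
  hence "card ?A = card (carrier G - ?A)" by (rule bij_betw_same_card)
  also have "\<dots> = card (carrier G) - card ?A"
    by (rule card_Diff_subset[OF finite_subset[OF A_sub finite_carrier] A_sub])
  finally show ?thesis using card_carrier card_mono[OF finite_carrier A_sub] by linarith
qed

lemma conj_s_nf: "inv (nf j b) \<otimes> s \<otimes> nf j b = nf (if b then j + j else - j - j) True"
proof -
  have "inv (nf j b) \<otimes> s \<otimes> nf j b = inv (nf j b) \<otimes> nf 0 True \<otimes> nf j b" by (simp add: nf_s)
  thus ?thesis by (cases b) (simp_all add: nf_inv nf_mult)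
qed

lemma nf_reflection_mem_gens: "nf c True \<in> {s, t} \<longleftrightarrow> int m dvd c \<or> int m dvd (c + 1)"
proof -
  have "nf c True = s \<longleftrightarrow> int m dvd c"
    using nf_eq_iff[of c True 0 True] by (simp add: nf_s mod_eq_0_iff_dvd)
  moreover have "nf c True = t \<longleftrightarrow> int m dvd (c + 1)"
    using nf_eq_iff[of c True "-1" True] by (simp add: nf_t mod_eq_dvd_iff)
  ultimately show ?thesis by blast
qed

lemma card_X_set_inter_X_sharp_s: "card (X_set G {s, t} {s} \<inter> X_sharp G {s, t} {s}) = 2"
proof -
  let ?j = "(int m + 1) div 2"
  have j: "0 \<le> ?j" "?j < int m" "?j \<noteq> 0" using two_le_m by auto
  have "X_set G {s, t} {s} \<inter> X_sharp G {s, t} {s} = {nf 0 False, nf ?j (even m)}"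
  proof -
    have memb: "x \<in> X_set G {s, t} {s} \<inter> X_sharp G {s, t} {s} \<longleftrightarrow> x = nf 0 False \<or> x = nf ?j (even m)"
      if "x \<in> carrier G" for x
    proof (rule carrier_nf_reduced[OF that])
      fix j' b assume j': "0 \<le> j'" "j' < int m" and x: "x = nf j' b"
      have "x \<in> X_set G {s, t} {s} \<inter> X_sharp G {s, t} {s} \<longleftrightarrow>
          nf_len j' b < nf_len (s_idx (int m) j') (\<not> b) \<and> inv x \<otimes> s \<otimes> x \<in> {s, t}"
        using x nf_mem_X_s[OF j'] by (auto simp: X_sharp_def)
      also have "\<dots> \<longleftrightarrow> (j' = 0 \<and> \<not> b) \<or> (j' = ?j \<and> b = even (int m))"
        unfolding x conj_s_nf nf_reflection_mem_gens
        by (rule dih_len_s_ascent_sharp[OF j' two_le_int_m]) simp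
      also have "\<dots> \<longleftrightarrow> x = nf 0 False \<or> x = nf ?j (even m)"
        using x nf_eq_iff_reduced[OF j'] j two_le_m by auto
      finally show ?thesis .
    qed
    show ?thesis
    proof (rule Set.set_eqI)
      fix x
      show "x \<in> X_set G {s, t} {s} \<inter> X_sharp G {s, t} {s} \<longleftrightarrow> x \<in> {nf 0 False, nf ?j (even m)}"
      proof (cases "x \<in> carrier G")
        case True
        thus ?thesis using memb[OF True] by simp
      next
        case False
        thus ?thesis by (auto simp: X_set_def)
      qed
    qed
  qed
  moreover have "nf 0 False \<noteq> nf ?j (even m)"
    using nf_eq_iff_reduced[of 0 ?j False "even m"] j two_le_m by simp
  ultimately show ?thesis by (simp only: card_2_iff) blast
qed

lemma card_X_set_inter_X_sharp_t: "card (X_set G {s, t} {t} \<inter> X_sharp G {s, t} {t}) = 2"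
proof -
  interpret ts: dihedral G t s m by (rule dihedral_swap)
  show ?thesis using ts.card_X_set_inter_X_sharp_s by (simp add: insert_commute)
qed

section \<open>The elements \<open>e\<^sub>L\<close> of a dihedral group\<close>

lemma x_elt_apply:
  "x_elt G {s, t} J y = (if y \<in> carrier G \<and> inv y \<in> X_set G {s, t} J then 1 else 0)"
proof -
  have X_sub: "X_set G {s, t} J \<subseteq> carrier G" by (auto simp: X_set_def)
  have "x_elt G {s, t} J y
      = (\<Sum>x\<in>X_set G {s, t} J. if x = inv y then (if y \<in> carrier G then 1 else 0) else 0)"
    unfolding x_elt_def sum_fun_apply
    by (rule sum.cong) (use X_sub in \<open>auto simp: gdelta_def\<close>)
  also have "\<dots> = (if y \<in> carrier G \<and> inv y \<in> X_set G {s, t} J then 1 else 0)"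
    using finite_subset[OF X_sub finite_carrier] by (simp add: sum.delta')
  finally show ?thesis .
qed

lemma X_set_empty: "X_set G {s, t} {} = carrier G"
  by (simp add: X_set_def)

lemma X_sharp_empty: "X_sharp G {s, t} {} = carrier G"
  by (simp add: X_sharp_def X_set_empty)

lemma one_mem_X_sharp:
  assumes J: "J \<subseteq> {s, t}"
  shows "\<one> \<in> X_sharp G {s, t} J"
proof -
  have "\<one> \<in> X_set G {s, t} {s, t}" using X_set_full by simp
  hence "\<one> \<in> X_set G {s, t} J" using J by (auto simp: X_set_def)
  moreover have "(\<lambda>r. inv \<one> \<otimes> r \<otimes> \<one>) ` J \<subseteq> {s, t}" using J by auto
  ultimately show ?thesis by (simp add: X_sharp_def)
qed

lemma s_ne_t: "s \<noteq> t"
proof -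
  have "t = nf (int m - 1) True" using nf_t nf_add_m[of "-1" True] by simp
  thus ?thesis using nf_eq_iff_reduced[of 0 "int m - 1" True True] nf_s two_le_m by simp
qed

lemma m_coef_values:
  "m_coef G {s, t} {} {} = 2 * m"
  "m_coef G {s, t} {s} {} = m" "m_coef G {s, t} {t} {} = m"
  "m_coef G {s, t} {s} {s} = 2" "m_coef G {s, t} {t} {t} = 2"
  "J \<subseteq> {s, t} \<Longrightarrow> m_coef G {s, t} {s, t} J = 1"
  "m_coef G {s, t} {} {s} = 0" "m_coef G {s, t} {} {t} = 0" "m_coef G {s, t} {} {s, t} = 0"
  "m_coef G {s, t} {s} {t} = 0" "m_coef G {s, t} {s} {s, t} = 0"
  "m_coef G {s, t} {t} {s} = 0" "m_coef G {s, t} {t} {s, t} = 0"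
proof -
  have X_sub: "X_set G {s, t} K \<subseteq> carrier G" for K by (auto simp: X_set_def)
  show "m_coef G {s, t} {} {} = 2 * m"
    by (simp add: m_coef_def X_set_empty X_sharp_empty card_carrier)
  show "m_coef G {s, t} {s} {} = m" "m_coef G {s, t} {t} {} = m"
    using X_sub card_X_set_singleton by (simp_all add: m_coef_def X_sharp_empty Int_absorb2)
  show "m_coef G {s, t} {s} {s} = 2" "m_coef G {s, t} {t} {t} = 2"
    by (simp_all add: m_coef_def card_X_set_inter_X_sharp_s card_X_set_inter_X_sharp_t)
  show "J \<subseteq> {s, t} \<Longrightarrow> m_coef G {s, t} {s, t} J = 1"
    using X_set_full one_mem_X_sharp by (auto simp: m_coef_def Int_absorb2)
  show "m_coef G {s, t} {} {s} = 0" "m_coef G {s, t} {} {t} = 0" "m_coef G {s, t} {} {s, t} = 0"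
    "m_coef G {s, t} {s} {t} = 0" "m_coef G {s, t} {s} {s, t} = 0"
    "m_coef G {s, t} {t} {s} = 0" "m_coef G {s, t} {t} {s, t} = 0"
    using s_ne_t by (auto simp: m_coef_def)
qed

text \<open>The unique solution of the unitriangular system defining \<open>e_fam\<close>, solved from the bottom up.\<close>
definition e_single :: "'a \<Rightarrow> 'a \<Rightarrow> complex" where
  "e_single g = (\<lambda>x. (x_elt G {s, t} {g} x - of_nat m * avg_elt (carrier G) x) / 2)"

definition e_solution :: "'a set \<Rightarrow> 'a \<Rightarrow> complex" where
  "e_solution J =
     (if J = {} then avg_elt (carrier G)
      else if J = {s} then e_single s
      else if J = {t} then e_single t
      else if J = {s, t} then
        (\<lambda>x. x_elt G {s, t} {s, t} x - avg_elt (carrier G) x - e_single s x - e_single t x)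
      else (\<lambda>_. 0))"

lemma e_solution_simps:
  "e_solution {} = avg_elt (carrier G)"
  "e_solution {s} = e_single s" "e_solution {t} = e_single t"
  "e_solution {s, t} =
     (\<lambda>x. x_elt G {s, t} {s, t} x - avg_elt (carrier G) x - e_single s x - e_single t x)"
  "\<not> J \<subseteq> {s, t} \<Longrightarrow> e_solution J = (\<lambda>_. 0)"
  using s_ne_t by (auto simp: e_solution_def)

lemma x_elt_empty: "x_elt G {s, t} {} = cscale (of_nat (2 * m)) (avg_elt (carrier G))"
  using two_le_m by (auto simp: fun_eq_iff x_elt_apply X_set_empty avg_elt_def cscale_def card_carrier)

lemma x_elt_eq_sum_iff:
  "x_elt G {s, t} K = (\<Sum>J\<in>Pow {s, t}. (\<lambda>x. of_nat (m_coef G {s, t} K J) * e J x))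
     \<longleftrightarrow> (\<forall>x. x_elt G {s, t} K x =
           of_nat (m_coef G {s, t} K {}) * e {} x + of_nat (m_coef G {s, t} K {s}) * e {s} x
           + of_nat (m_coef G {s, t} K {t}) * e {t} x + of_nat (m_coef G {s, t} K {s, t}) * e {s, t} x)"
  by (simp add: sum_Pow_doubleton[OF s_ne_t] fun_eq_iff)

lemma e_fam_eq_e_solution: "e_fam G {s, t} = e_solution"
  unfolding e_fam_def
proof (rule the_equality)
  have m: "of_nat m \<noteq> (0::complex)" using two_le_m by simp
  let ?eq = "\<lambda>e K. x_elt G {s, t} K = (\<Sum>J\<in>Pow {s, t}. (\<lambda>x. of_nat (m_coef G {s, t} K J) * e J x))"
  have subsets: "K \<subseteq> {s, t} \<longleftrightarrow> K = {} \<or> K = {s} \<or> K = {t} \<or> K = {s, t}" for K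
    by blast
  have "?eq e_solution K" if "K = {} \<or> K = {s} \<or> K = {t} \<or> K = {s, t}" for K
    using that m unfolding x_elt_eq_sum_iff
    by (elim disjE) (simp_all add: m_coef_values e_solution_simps e_single_def x_elt_empty
                                  cscale_def field_simps)
  thus "(\<forall>K. K \<subseteq> {s, t} \<longrightarrow> ?eq e_solution K) \<and> (\<forall>J. \<not> J \<subseteq> {s, t} \<longrightarrow> e_solution J = (\<lambda>_. 0))"
    using subsets e_solution_simps(5) by blast
  fix e
  assume e: "(\<forall>K. K \<subseteq> {s, t} \<longrightarrow> ?eq e K) \<and> (\<forall>J. \<not> J \<subseteq> {s, t} \<longrightarrow> e J = (\<lambda>_. 0))"
  hence eqs: "\<forall>K. K = {} \<or> K = {s} \<or> K = {t} \<or> K = {s, t} \<longrightarrow> (\<forall>x. x_elt G {s, t} K x =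
      of_nat (m_coef G {s, t} K {}) * e {} x + of_nat (m_coef G {s, t} K {s}) * e {s} x
      + of_nat (m_coef G {s, t} K {t}) * e {t} x + of_nat (m_coef G {s, t} K {s, t}) * e {s, t} x)"
    unfolding x_elt_eq_sum_iff subsets by blast
  have e0: "e {} = e_solution {}"
    using eqs[rule_format, of "{}"] m
    by (auto simp: fun_eq_iff m_coef_values e_solution_simps x_elt_empty cscale_def)
  have es: "e {s} = e_solution {s}" and et: "e {t} = e_solution {t}"
    using eqs[rule_format, of "{s}"] eqs[rule_format, of "{t}"] e0
    by (auto simp: fun_eq_iff m_coef_values e_solution_simps e_single_def field_simps)
  have eS: "e {s, t} = e_solution {s, t}"
    using eqs[rule_format, of "{s, t}"] e0 es et
    by (auto simp: fun_eq_iff m_coef_values e_solution_simps e_single_def algebra_simps)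
  show "e = e_solution"
  proof
    fix J show "e J = e_solution J"
      using e e0 es et eS subsets[of J] by (cases "J \<subseteq> {s, t}") (auto simp: e_solution_simps)
  qed
qed

lemma left_ascent_count:
  assumes x: "x \<in> carrier G"
  shows "(if x \<in> X_set G {s, t} {s} then 1 else 0) + (if x \<in> X_set G {s, t} {t} then 1 else 0)
     = (1::complex) + (if x = \<one> then 1 else 0) - (if x = w0 then 1 else 0)"
  using X_set_full X_set_doubleton not_mem_X_s_X_t_iff[OF x] w0_ne_one by auto

lemma e_fam_full_eq: "e_fam G {s, t} {s, t} = avg_elt {\<one>, w0} - avg_elt (carrier G)"
proof
  fix y
  show "e_fam G {s, t} {s, t} y = (avg_elt {\<one>, w0} - avg_elt (carrier G)) y"
  proof (cases "y \<in> carrier G")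
    case True
    have iy: "inv y \<in> carrier G" and one: "inv y = \<one> \<longleftrightarrow> y = \<one>" and w: "inv y = w0 \<longleftrightarrow> y = w0"
      using True by (auto simp: inv_eq_1_iff) (metis inv_inv inv_w0 w0_closed)+
    have "e_fam G {s, t} {s, t} y = (if y = \<one> then 1 else 0) - 1 / of_nat (2 * m)
        - ((if inv y \<in> X_set G {s, t} {s} then 1 else 0) + (if inv y \<in> X_set G {s, t} {t} then 1 else 0)) / 2
        + of_nat m / of_nat (2 * m)"
      using True X_set_full one
      by (simp add: e_fam_eq_e_solution e_solution_simps e_single_def x_elt_apply avg_elt_def card_carrier
                    field_simps)
    also have "\<dots> = ((if y = \<one> then 1 else 0) + (if y = w0 then 1 else 0)) / 2 - 1 / of_nat (2 * m)"
      unfolding left_ascent_count[OF iy] one w using two_le_m by (simp add: field_simps)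
    finally show ?thesis
      using True w0_ne_one by (auto simp: avg_elt_def card_carrier)
  next
    case False
    thus ?thesis using w0_closed
      by (auto simp: e_fam_eq_e_solution e_solution_simps e_single_def x_elt_apply avg_elt_def)
  qed
qed

theorem right_ideal_char_e_fam_full:
  assumes w: "w \<in> carrier G"
  shows "right_ideal_char G (e_fam G {s, t} {s, t}) w = ind_triv G (generate G {longest_elt G {s, t}}) w - 1"
  unfolding e_fam_full_eq longest_elt_eq_w0 generate_w0[symmetric]
  by (rule right_ideal_char_avg_diff[OF generate_is_subgroup w]) simp

end

theorem corollary5p5:
  fixes G :: "('a, 'b) monoid_scheme" and s t :: 'a and m :: nat
  assumes "group G"
    and "s \<in> carrier G" and "t \<in> carrier G"
    and "carrier G = generate G {s, t}"
    and "s \<noteq> \<one>\<^bsub>G\<^esub>" and "t \<noteq> \<one>\<^bsub>G\<^esub>"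
    and "s \<otimes>\<^bsub>G\<^esub> s = \<one>\<^bsub>G\<^esub>" and "t \<otimes>\<^bsub>G\<^esub> t = \<one>\<^bsub>G\<^esub>"
    and "m \<ge> 2"
    and "(s \<otimes>\<^bsub>G\<^esub> t) [^]\<^bsub>G\<^esub> m = \<one>\<^bsub>G\<^esub>"
    and "\<forall>k. 0 < k \<and> k < m \<longrightarrow> (s \<otimes>\<^bsub>G\<^esub> t) [^]\<^bsub>G\<^esub> k \<noteq> \<one>\<^bsub>G\<^esub>"
  shows "\<forall>w\<in>carrier G.
           right_ideal_char G (e_fam G {s, t} {s, t}) w
         = ind_triv G (generate G {longest_elt G {s, t}}) w - 1"
proof -
  interpret dihedral G s t m
    using assms by (simp add: dihedral_def dihedral_axioms_def)
  show ?thesis using right_ideal_char_e_fam_full by blast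
qed

end
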